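(* Let $M$ be a simple restricted $\bar{\mathfrak D}$-module with central charge $c$ and level $\ell\ne0$. If $r_M=-\infty$, then $M=K(z)^{\bar{\mathfrak D}}$ for some $z\in\mathbb C$ (i.e. $K=M$ and the $\bar{\mathfrak D}$-action is the one defining $K(z)^{\bar{\mathfrak D}}$). Hence $c=1-\frac{12z^2}{\ell}$ and $K$ is a simple $\bar{\mathfrak h}$-module.
   Context: $\bar{\mathfrak D}$ has basis $\{d_m,h_r,\bar c_1,\bar c_2,\bar c_3:m,r\in\mathbb Z\}$, brackets $[d_m,d_n]=(m-n)d_{m+n}+\delta_{m+n,0}\frac{m^3-m}{12}\bar c_1$, $[d_m,h_r]=-rh_{m+r}+\delta_{m+r,0}(m^2+m)\bar c_2$, $[h_r,h_s]=r\delta_{r+s,0}\bar c_3$, $\bar c_i$ central; $\bar{\mathfrak h}=\mathrm{span}\{h_r,\bar c_3\}$. Restricted: each vector killed by $d_i,h_i$ for large $i$. Central charge $c$: $\bar c_1$ acts as $c$; level $\ell$: $\bar c_3$ acts as $\ell$. For $z\in\mathbb C$ and a restricted $\bar{\mathfrak h}$-module $H$ of level $\ell\ne0$, $H(z)^{\bar{\mathfrak D}}$ is $H$ with $\bar c_1\mapsto1-\frac{12z^2}{\ell}$, $\bar c_2\mapsto z$, $d_n\mapsto\bar L_n=\frac1{2\ell}\sum_{k\in\mathbb Z}{:}h_{n-k}h_k{:}+\frac{(n+1)z}{\ell}h_n$, where ${:}h_rh_s{:}=h_rh_s$ if $r\le s$, $=h_sh_r$ otherwise. Invariants: with $\bar{\mathfrak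 h}_{\ge r}=\bigoplus_{i\ge0}\mathbb Ch_{r+i}$: $M(r)=\mathrm{Ann}_M(\bar{\mathfrak h}_{\ge r})$, $n_M=\min\{r:M(r)\ne0\}$, $M_0=M(n_M)$. With $z_M$ the scalar of $\bar c_2$ on $M$, let $\bar L_n$ (with $z=z_M$) act on $M$ and $d'_n=d_n-\bar L_n$; $Y_n=\bigcap_{p\ge n}\mathrm{Ann}_{M_0}(d'_p)$, $r_M=\min\{n\in\mathbb Z:Y_n\ne0\}$, or $-\infty$ if all $Y_n\ne0$; $K_0=\bigcap_nY_n$ when $r_M=-\infty$; $K=U(\bar{\mathfrak h})K_0$. *)

theory Defs
  imports Main "HOL.Complex"
begin

text \<open>A module M over the Lie algebra D-bar is modelled as a complex vector space
(the whole type 'm, with scalar multiplication sc), together with the actions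
d m and h r of the basis vectors d_m, h_r. The central elements c1, c2, c3 act
by the scalars c, zc, l respectively.\<close>

definition is_Dbar_module ::
  "(complex \<Rightarrow> 'm::ab_group_add \<Rightarrow> 'm) \<Rightarrow> (int \<Rightarrow> 'm \<Rightarrow> 'm) \<Rightarrow> (int \<Rightarrow> 'm \<Rightarrow> 'm)
   \<Rightarrow> complex \<Rightarrow> complex \<Rightarrow> complex \<Rightarrow> bool" where
  "is_Dbar_module sc d h c zc l \<longleftrightarrow>
     vector_space sc \<and>
     (\<forall>m. Vector_Spaces.linear sc sc (d m)) \<and>
     (\<forall>r. Vector_Spaces.linear sc sc (h r)) \<and>
     (\<forall>m n v. d m (d n v) - d n (d m v) =
        sc (of_int (m - n)) (d (m + n) v) +
        (if m + n = 0 then sc ((of_int m ^ 3 - of_int m) / 12 * c) v else 0)) \<and>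
     (\<forall>m r v. d m (h r v) - h r (d m v) =
        sc (- of_int r) (h (m + r) v) +
        (if m + r = 0 then sc ((of_int m ^ 2 + of_int m) * zc) v else 0)) \<and>
     (\<forall>r s v. h r (h s v) - h s (h r v) =
        (if r + s = 0 then sc (of_int r * l) v else 0))"

definition restricted :: "(int \<Rightarrow> 'm::zero \<Rightarrow> 'm) \<Rightarrow> (int \<Rightarrow> 'm \<Rightarrow> 'm) \<Rightarrow> bool" where
  "restricted d h \<longleftrightarrow> (\<forall>v. \<exists>N. \<forall>i\<ge>N. d i v = 0 \<and> h i v = 0)"

text \<open>Simplicity of M as a D-bar-module (central elements act by scalars,
so every subspace is invariant under them).\<close>
definition simple_Dbar ::
  "(complex \<Rightarrow> 'm::ab_group_add \<Rightarrow> 'm) \<Rightarrow> (int \<Rightarrow> 'm \<Rightarrow> 'm) \<Rightarrow> (int \<Rightarrow> 'm \<Rightarrow> 'm) \<Rightarrow> bool" where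
  "simple_Dbar sc d h \<longleftrightarrow> (\<exists>v::'m. v \<noteq> 0) \<and>
     (\<forall>W. module.subspace sc W \<and> (\<forall>m. d m ` W \<subseteq> W) \<and> (\<forall>r. h r ` W \<subseteq> W)
          \<longrightarrow> W = {0} \<or> W = UNIV)"

text \<open>Simplicity of a subspace K as an h-bar-module (c3 acts by a scalar).\<close>
definition simple_hbar_sub ::
  "(complex \<Rightarrow> 'm::ab_group_add \<Rightarrow> 'm) \<Rightarrow> (int \<Rightarrow> 'm \<Rightarrow> 'm) \<Rightarrow> 'm set \<Rightarrow> bool" where
  "simple_hbar_sub sc h K \<longleftrightarrow> module.subspace sc K \<and> (\<forall>r. h r ` K \<subseteq> K) \<and>
     (\<exists>v\<in>K. v \<noteq> 0) \<and>
     (\<forall>W. module.subspace sc W \<and> W \<subseteq> K \<and> (\<forall>r. h r ` W \<subseteq> W) \<longrightarrow> W = {0} \<or> W = K)"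

definition fsum :: "(int \<Rightarrow> 'm::comm_monoid_add) \<Rightarrow> 'm" where
  "fsum f = sum f {k. f k \<noteq> 0}"

definition Lbar ::
  "(complex \<Rightarrow> 'm::ab_group_add \<Rightarrow> 'm) \<Rightarrow> (int \<Rightarrow> 'm \<Rightarrow> 'm) \<Rightarrow> complex \<Rightarrow> complex \<Rightarrow> int \<Rightarrow> 'm \<Rightarrow> 'm" where
  "Lbar sc h l z n v =
     sc (1 / (2 * l)) (fsum (\<lambda>k. if n - k \<le> k then h (n - k) (h k v) else h k (h (n - k) v)))
     + sc ((of_int n + 1) * z / l) (h n v)"

definition Msub :: "(int \<Rightarrow> 'm::zero \<Rightarrow> 'm) \<Rightarrow> int \<Rightarrow> 'm set" where
  "Msub h r = {v. \<forall>i::int. i \<ge> 0 \<longrightarrow> h (r + i) v = 0}"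

definition nM :: "(int \<Rightarrow> 'm::zero \<Rightarrow> 'm) \<Rightarrow> int" where
  "nM h = (LEAST r. \<exists>v\<in>Msub h r. v \<noteq> 0)"

definition M0 :: "(int \<Rightarrow> 'm::zero \<Rightarrow> 'm) \<Rightarrow> 'm set" where
  "M0 h = Msub h (nM h)"

definition Yset ::
  "(complex \<Rightarrow> 'm::ab_group_add \<Rightarrow> 'm) \<Rightarrow> (int \<Rightarrow> 'm \<Rightarrow> 'm) \<Rightarrow> (int \<Rightarrow> 'm \<Rightarrow> 'm)
   \<Rightarrow> complex \<Rightarrow> complex \<Rightarrow> int \<Rightarrow> 'm set" where
  "Yset sc d h l zM n = {v \<in> M0 h. \<forall>p\<ge>n. d p v - Lbar sc h l zM p v = 0}"

text \<open>r_M = -infinity means every Y_n is nonzero.\<close>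
definition rM_minus_infty ::
  "(complex \<Rightarrow> 'm::ab_group_add \<Rightarrow> 'm) \<Rightarrow> (int \<Rightarrow> 'm \<Rightarrow> 'm) \<Rightarrow> (int \<Rightarrow> 'm \<Rightarrow> 'm)
   \<Rightarrow> complex \<Rightarrow> complex \<Rightarrow> bool" where
  "rM_minus_infty sc d h l zM \<longleftrightarrow> (\<forall>n. \<exists>v\<in>Yset sc d h l zM n. v \<noteq> 0)"

definition K0 ::
  "(complex \<Rightarrow> 'm::ab_group_add \<Rightarrow> 'm) \<Rightarrow> (int \<Rightarrow> 'm \<Rightarrow> 'm) \<Rightarrow> (int \<Rightarrow> 'm \<Rightarrow> 'm)
   \<Rightarrow> complex \<Rightarrow> complex \<Rightarrow> 'm set" where
  "K0 sc d h l zM = (\<Inter>n. Yset sc d h l zM n)"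

definition hgen :: "(complex \<Rightarrow> 'm::ab_group_add \<Rightarrow> 'm) \<Rightarrow> (int \<Rightarrow> 'm \<Rightarrow> 'm) \<Rightarrow> 'm set \<Rightarrow> 'm set" where
  "hgen sc h S = \<Inter>{W. module.subspace sc W \<and> S \<subseteq> W \<and> (\<forall>r. h r ` W \<subseteq> W)}"

end

theory Submission
  imports Defs "HOL-Library.Groups_Big_Fun"
begin

(* The Sugawara operators L_n built from the h_r satisfy the Virasoro relations with central
   charge 1 - 12 z^2/l and have the same brackets with the h_r as the d_n. Hence d'_n = d_n - L_n
   commutes with all h_r and all L_n, and [d'_m, d'_n] = (m - n) d'_(m+n) whenever m + n /= 0.
   A nonzero vector of Y_(-2) is killed by d'_(-1) and d'_(-2), hence by every d'_p; the common
   kernel of the d'_p is then a nonzero submodule of the simple module M, so d_n = L_n on M.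
   Comparing central terms gives c, and since the L_n preserve every h-invariant subspace, the
   h-invariant subspaces are submodules: M is simple over h-bar and K = M. *)

lemma fsum_eq_Sum_any: "fsum f = Sum_any f"
  by (cases "finite {k. f k \<noteq> 0}") (simp_all add: fsum_def Sum_any.expand_set)

lemma Sum_any_diff:
  fixes f g :: "'a \<Rightarrow> 'b::ab_group_add"
  assumes "finite {k. f k \<noteq> 0}" and "finite {k. g k \<noteq> 0}"
  shows "Sum_any (\<lambda>k. f k - g k) = Sum_any f - Sum_any g"
proof -
  let ?A = "{k. f k \<noteq> 0} \<union> {k. g k \<noteq> 0}"
  have "Sum_any f = sum f ?A" "Sum_any g = sum g ?A" "Sum_any (\<lambda>k. f k - g k) = (\<Sum>k\<in>?A. f k - g k)"
    using assms by (auto intro: Sum_any.expand_superset)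
  then show ?thesis by (simp add: sum_subtractf)
qed

lemma Sum_any_shift: "Sum_any (\<lambda>k. g (k + m)) = Sum_any (g :: int \<Rightarrow> 'a::comm_monoid_add)"
  by (rule sym, rule Sum_any.reindex_cong[where l = "\<lambda>k. k + m"]) (auto simp: bij_plus_right)

lemma finite_support_add:
  "finite {k. f k \<noteq> 0} \<Longrightarrow> finite {k. g k \<noteq> 0} \<Longrightarrow> finite {k. f k + g k \<noteq> (0::'a::monoid_add)}"
  by (rule finite_subset[of _ "{k. f k \<noteq> 0} \<union> {k. g k \<noteq> 0}"]) auto

lemma (in module_hom) Sum_any_commute:
  assumes "finite {k. g k \<noteq> 0}"
  shows "f (Sum_any g) = Sum_any (\<lambda>k. f (g k))"
proof -
  have "Sum_any (\<lambda>k. f (g k)) = (\<Sum>k | g k \<noteq> 0. f (g k))"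
    using assms by (intro Sum_any.expand_superset) auto
  then show ?thesis by (simp add: Sum_any.expand_set sum)
qed

lemma (in module) Sum_any_scale:
  assumes "finite {k. g k \<noteq> 0}"
  shows "Sum_any (\<lambda>k. scale a (g k)) = scale a (Sum_any g)"
  by (rule module_hom.Sum_any_commute[OF module_hom_scale_self assms, symmetric])

lemma (in module) Sum_any_scale_of_int:
  assumes "finite {k. a k \<noteq> 0}"
  shows "Sum_any (\<lambda>k. scale (c * of_int (a k)) w) = scale (c * of_int (Sum_any a)) w"
proof -
  have "Sum_any (\<lambda>k. scale (c * of_int (a k)) w) = (\<Sum>k | a k \<noteq> 0. scale (c * of_int (a k)) w)"
    using assms by (intro Sum_any.expand_superset) auto
  then show ?thesis
    by (simp add: Sum_any.expand_set scale_sum_left sum_distrib_left)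
qed

(* The scalar, up to the factor l, that appears when h_(m+a) h_b and h_a h_(m+b) are brought
   back into normal order, where a = -m-k and b = k (see L_normal_prod). *)
definition anomaly :: "int \<Rightarrow> int \<Rightarrow> int" where
  "anomaly m k = (if k < 0 then - ((m + k) * k) else 0) + (if k < - m then (m + k) * k else 0)"

lemma anomaly_shift: "0 \<le> m \<Longrightarrow> anomaly m (j - m) = (if 0 \<le> j \<and> j < m then j * (m - j) else 0)"
  by (auto simp: anomaly_def algebra_simps)

lemma anomaly_uminus: "anomaly (- m) (- k) = - anomaly m k"
  by (cases "k = - m") (auto simp: anomaly_def algebra_simps)

lemma finite_support_anomaly: "finite {k. anomaly m k \<noteq> 0}"
  by (rule finite_subset[of _ "{- \<bar>m\<bar>..\<bar>m\<bar>}"]) (auto simp: anomaly_def)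

lemma sum_mult_diff_eq: "6 * (\<Sum>j<n. int j * (int n - int j)) = int n ^ 3 - int n"
proof (induction n)
  case (Suc n)
  have gauss: "2 * (\<Sum>j<n. int j) = int n ^ 2 - int n"
    by (induction n) (auto simp: algebra_simps power2_eq_square)
  have "(\<Sum>j<Suc n. int j * (int (Suc n) - int j))
      = (\<Sum>j<n. int j * (int n - int j) + int j) + int n"
    by (simp add: algebra_simps)
  also have "\<dots> = (\<Sum>j<n. int j * (int n - int j)) + (\<Sum>j<n. int j) + int n"
    by (simp only: sum.distrib)
  finally show ?case using Suc gauss
    by (simp add: algebra_simps power3_eq_cube power2_eq_square)
qed simp

lemma Sum_any_anomaly_nonneg:
  assumes "0 \<le> m"
  shows "6 * Sum_any (anomaly m) = m ^ 3 - m"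
proof -
  obtain n where m: "m = int n" using assms nonneg_int_cases by blast
  have "int ` {..<n} = {0..<m}"
    by (simp add: m image_int_atLeastLessThan flip: atLeast0LessThan)
  then have "Sum_any (anomaly m) = Sum_any (\<lambda>j. if j \<in> int ` {..<n} then j * (m - j) else 0)"
    unfolding Sum_any_shift[of "anomaly m" "- m", symmetric]
    using anomaly_shift[OF assms] by (auto intro!: Sum_any.cong)
  also have "\<dots> = (\<Sum>j<n. int j * (int n - int j))"
    by (simp add: Sum_any.conditionalize[symmetric] sum.reindex m)
  finally show ?thesis using sum_mult_diff_eq m by simp
qed

lemma Sum_any_anomaly: "6 * Sum_any (anomaly m) = m ^ 3 - m"
proof (cases "0 \<le> m")
  case False
  have "Sum_any (anomaly m) = Sum_any (\<lambda>k. anomaly m (- k))"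
    by (rule Sum_any.reindex_cong[where l = uminus]) (auto simp: bij_uminus comp_def)
  also have "\<dots> = - Sum_any (anomaly (- m))"
    using Sum_any_diff[of "\<lambda>_. 0" "anomaly (- m)"] finite_support_anomaly
    by (simp add: anomaly_uminus[of "- m", simplified])
  finally show ?thesis
    using Sum_any_anomaly_nonneg[of "- m"] False by (simp add: power3_eq_cube)
qed (rule Sum_any_anomaly_nonneg)

locale heisenberg_module = vector_space sc
  for sc :: "complex \<Rightarrow> 'm::ab_group_add \<Rightarrow> 'm" +
  fixes h :: "int \<Rightarrow> 'm \<Rightarrow> 'm" and l :: complex
  assumes h_linear: "Vector_Spaces.linear sc sc (h r)"
    and h_bracket: "h r (h s v) - h s (h r v) = (if r + s = 0 then sc (of_int r * l) v else 0)"
    and h_restricted: "\<exists>N. \<forall>i\<ge>N. h i v = 0"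
begin

lemma h_hom: "module_hom sc sc (h r)"
  using h_linear by (simp add: module_hom_iff_linear)

lemmas h_add = module_hom.add[OF h_hom]
  and h_scale = module_hom.scale[OF h_hom]
  and h_zero [simp] = module_hom.zero[OF h_hom]
  and h_diff = module_hom.diff[OF h_hom]

lemma h_swap: "h r (h s v) = h s (h r v) + (if r + s = 0 then sc (of_int r * l) v else 0)"
  using h_bracket[of r s v] by (simp add: diff_eq_eq)

lemma subspace_hgen: "subspace (hgen sc h S)"
  unfolding hgen_def by (rule subspace_Inter) auto

lemma hgen_h_invariant: "h r ` hgen sc h S \<subseteq> hgen sc h S"
  unfolding hgen_def by blast

lemma hgen_superset: "S \<subseteq> hgen sc h S"
  unfolding hgen_def by blast

definition normal_prod :: "int \<Rightarrow> int \<Rightarrow> 'm \<Rightarrow> 'm" where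
  "normal_prod a b w = (if a \<le> b then h a (h b w) else h b (h a w))"

definition quad :: "int \<Rightarrow> 'm \<Rightarrow> 'm" where
  "quad n w = Sum_any (\<lambda>k. normal_prod (n - k) k w)"

lemma h_h_eq_normal_prod:
  "h a (h b y) = normal_prod a b y + (if b < a \<and> a + b = 0 then sc (of_int a * l) y else 0)"
  unfolding normal_prod_def using h_swap[of a b y] by auto

lemma reordering_terms_eq_anomaly:
  "(if b < m + a \<and> m + a + b = 0 then sc (- of_int a) (sc (of_int (m + a) * l) x) else 0)
   + (if m + b < a \<and> a + (m + b) = 0 then sc (- of_int b) (sc (of_int a * l) x) else 0)
   = (if a + b + m = 0 then sc (l * of_int (anomaly m b)) x else 0)"
proof (cases "a + b + m = 0")
  case True
  then have a: "a = - m - b" by simp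
  have "l * of_int (anomaly m b) = (if b < m + a then - of_int a * (of_int (m + a) * l) else 0)
      + (if m + b < a then - of_int b * (of_int a * l) else 0)"
    by (simp add: a anomaly_def algebra_simps)
  then show ?thesis using True by (simp add: scale_left_distrib)
qed simp

lemma normal_prod_hom: "module_hom sc sc (normal_prod a b)"
  unfolding normal_prod_def
  by (cases "a \<le> b") (simp_all add: module_hom_compose[OF h_hom h_hom, unfolded comp_def])

lemma finite_support_normal_prod: "finite {k. normal_prod (n - k) k w \<noteq> 0}"
proof -
  obtain N where N: "\<And>i. h i w \<noteq> 0 \<Longrightarrow> i < N"
    using h_restricted by (meson linorder_not_le)
  have "{k. normal_prod (n - k) k w \<noteq> 0} \<subseteq> {n - N<..<N}"
  proof
    fix k assume "k \<in> {k. normal_prod (n - k) k w \<noteq> 0}"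
    then have "h k w \<noteq> 0 \<and> n - k \<le> k \<or> h (n - k) w \<noteq> 0 \<and> k < n - k"
      by (auto simp: normal_prod_def split: if_splits)
    then show "k \<in> {n - N<..<N}"
      using N[of k] N[of "n - k"] by auto
  qed
  then show ?thesis by (rule finite_subset) simp
qed

lemma finite_support_hom_normal_prod:
  assumes "module_hom sc sc F"
  shows "finite {k. F (normal_prod (n - k) k w) \<noteq> 0}"
  by (rule finite_subset[OF _ finite_support_normal_prod[of n w]]) (auto simp: module_hom.zero[OF assms])

lemma quad_commute:
  assumes F: "module_hom sc sc F" and Fh: "\<And>r x. F (h r x) = h r (F x)"
  shows "F (quad n w) = quad n (F w)"
proof -
  have "F (normal_prod a b x) = normal_prod a b (F x)" for a b x
    by (simp add: normal_prod_def Fh)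
  then show ?thesis
    unfolding quad_def module_hom.Sum_any_commute[OF F finite_support_normal_prod] by simp
qed

lemma quad_hom: "module_hom sc sc (quad n)"
proof (unfold_locales)
  fix x y show "quad n (x + y) = quad n x + quad n y"
    unfolding quad_def module_hom.add[OF normal_prod_hom]
    by (intro Sum_any.distrib finite_support_normal_prod)
  fix a show "quad n (sc a x) = sc a (quad n x)"
    unfolding quad_def module_hom.scale[OF normal_prod_hom]
    by (rule Sum_any_scale[OF finite_support_normal_prod])
qed

lemma normal_prod_h:
  "normal_prod a b (h r x) - h r (normal_prod a b x) =
     (if b + r = 0 then sc (of_int b * l) (h a x) else 0)
   + (if a + r = 0 then sc (of_int a * l) (h b x) else 0)"
proof -
  have "h a (h b (h r x)) = h r (h a (h b x))
      + (if a + r = 0 then sc (of_int a * l) (h b x) else 0)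
      + (if b + r = 0 then sc (of_int b * l) (h a x) else 0)" for a b
    by (simp add: h_swap[of b r] h_swap[of a r "h b x"] h_add h_scale)
  then show ?thesis
    unfolding normal_prod_def by (simp add: algebra_simps)
qed

lemma quad_h: "quad m (h r w) - h r (quad m w) = sc (- 2 * of_int r * l) (h (m + r) w)"
proof -
  have "quad m (h r w) - h r (quad m w)
      = Sum_any (\<lambda>k. normal_prod (m - k) k (h r w) - h r (normal_prod (m - k) k w))"
    unfolding quad_def module_hom.Sum_any_commute[OF h_hom finite_support_normal_prod]
    by (intro Sum_any_diff[symmetric] finite_support_normal_prod finite_support_hom_normal_prod h_hom)
  also have "\<dots> = Sum_any (\<lambda>k. (if k = - r then sc (of_int k * l) (h (m - k) w) else 0))
      + Sum_any (\<lambda>k. if k = m + r then sc (of_int (m - k) * l) (h k w) else 0)"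
    unfolding normal_prod_h
    by (subst Sum_any.distrib[symmetric]) (auto intro: Sum_any.cong finite_subset[of _ "{_}"])
  also have "\<dots> = sc (of_int (- r) * l) (h (m + r) w) + sc (of_int (- r) * l) (h (m + r) w)"
    by simp
  also have "\<dots> = sc (- 2 * of_int r * l) (h (m + r) w)"
    by (simp only: scale_left_distrib[symmetric]) simp
  finally show ?thesis .
qed

lemma Sum_any_normal_prod_shifts:
  "Sum_any (\<lambda>k. sc (- of_int (n - k)) (normal_prod (m + (n - k)) k w))
   + Sum_any (\<lambda>k. sc (- of_int k) (normal_prod (n - k) (m + k) w))
   = sc (of_int (m - n)) (quad (m + n) w)"
proof -
  let ?P = "\<lambda>k. normal_prod (m + n - k) k w"
  have fin: "finite {k. sc (c k) (?P k) \<noteq> 0}" for c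
    by (rule finite_subset[OF _ finite_support_normal_prod[of "m + n" w]]) auto
  have "Sum_any (\<lambda>k. sc (- of_int k) (normal_prod (n - k) (m + k) w))
      = Sum_any (\<lambda>k. sc (- of_int (k - m)) (?P k))"
    unfolding Sum_any_shift[of "\<lambda>k. sc (- of_int k) (normal_prod (n - k) (m + k) w)" "- m", symmetric]
    by (simp add: algebra_simps)
  moreover have "Sum_any (\<lambda>k. sc (- of_int (n - k)) (normal_prod (m + (n - k)) k w))
      = Sum_any (\<lambda>k. sc (- of_int (n - k)) (?P k))"
    by (simp add: algebra_simps)
  ultimately have "Sum_any (\<lambda>k. sc (- of_int (n - k)) (normal_prod (m + (n - k)) k w))
      + Sum_any (\<lambda>k. sc (- of_int k) (normal_prod (n - k) (m + k) w))
      = Sum_any (\<lambda>k. sc (- of_int (n - k)) (?P k) + sc (- of_int (k - m)) (?P k))"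
    using Sum_any.distrib[OF fin fin] by simp
  also have "\<dots> = Sum_any (\<lambda>k. sc (of_int (m - n)) (?P k))"
    by (rule Sum_any.cong) (simp flip: scale_left_distrib)
  also have "\<dots> = sc (of_int (m - n)) (quad (m + n) w)"
    unfolding quad_def by (rule Sum_any_scale[OF finite_support_normal_prod])
  finally show ?thesis .
qed

end

locale sugawara = heisenberg_module sc h l
  for sc :: "complex \<Rightarrow> 'm::ab_group_add \<Rightarrow> 'm" and h l +
  fixes z :: complex
  assumes level_nonzero: "l \<noteq> 0"
begin

abbreviation L where "L \<equiv> Lbar sc h l z"

lemma L_eq: "L n w = sc (1 / (2 * l)) (quad n w) + sc ((of_int n + 1) * z / l) (h n w)"
  unfolding Lbar_def quad_def normal_prod_def fsum_eq_Sum_any ..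

lemma L_hom: "module_hom sc sc (L n)"
proof unfold_locales
  fix x y show "L n (x + y) = L n x + L n y"
    unfolding L_eq by (simp add: module_hom.add[OF quad_hom] h_add scale_right_distrib)
  fix a show "L n (sc a x) = sc a (L n x)"
    unfolding L_eq by (simp add: module_hom.scale[OF quad_hom] h_scale scale_right_distrib)
qed

lemmas L_add = module_hom.add[OF L_hom]
  and L_scale = module_hom.scale[OF L_hom]
  and L_zero [simp] = module_hom.zero[OF L_hom]

lemma L_commute:
  assumes F: "module_hom sc sc F" and Fh: "\<And>r x. F (h r x) = h r (F x)"
  shows "F (L n w) = L n (F w)"
  unfolding L_eq
  by (simp add: module_hom.add[OF F] module_hom.scale[OF F] quad_commute[OF F Fh] Fh)

lemma L_h: "L m (h r w) - h r (L m w) = sc (- of_int r) (h (m + r) w) +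
    (if m + r = 0 then sc ((of_int m ^ 2 + of_int m) * z) w else 0)"
proof -
  have coeff: "(of_int m + 1) * z / l * (of_int m * l) = (of_int m ^ 2 + of_int m) * z"
    using level_nonzero by (simp add: field_simps power2_eq_square)
  have "L m (h r w) - h r (L m w) = sc (1 / (2 * l)) (quad m (h r w) - h r (quad m w))
      + sc ((of_int m + 1) * z / l) (h m (h r w) - h r (h m w))"
    unfolding L_eq by (simp add: h_add h_scale algebra_simps)
  also have "\<dots> = sc (- of_int r) (h (m + r) w)
      + sc ((of_int m + 1) * z / l) (if m + r = 0 then sc (of_int m * l) w else 0)"
    using level_nonzero by (simp add: quad_h h_bracket)
  also have "\<dots> = sc (- of_int r) (h (m + r) w) +
      (if m + r = 0 then sc ((of_int m ^ 2 + of_int m) * z) w else 0)"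
    by (cases "m + r = 0") (simp_all only: simp_thms if_True if_False scale_scale coeff scale_zero_right)
  finally show ?thesis .
qed

lemma L_normal_prod:
  "L m (normal_prod a b x) - normal_prod a b (L m x) =
     sc (- of_int a) (normal_prod (m + a) b x) + sc (- of_int b) (normal_prod a (m + b) x)
   + (if m + a = 0 then sc ((of_int m ^ 2 + of_int m) * z) (h b x) else 0)
   + (if m + b = 0 then sc ((of_int m ^ 2 + of_int m) * z) (h a x) else 0)
   + (if a + b + m = 0 then sc (l * of_int (anomaly m b)) x else 0)"
proof -
  define g where "g = (of_int m ^ 2 + of_int m) * z"
  have L_h': "L m (h r w) = h r (L m w) + sc (- of_int r) (h (m + r) w)
      + (if m + r = 0 then sc g w else 0)" for r w
    using L_h[of m r w] unfolding g_def by (simp add: diff_eq_eq add.assoc)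
  have "L m (normal_prod a b x) - normal_prod a b (L m x) = L m (h a (h b x)) - h a (h b (L m x))"
    by (auto simp: h_h_eq_normal_prod[of a b] L_add L_scale)
  also have "\<dots> = sc (- of_int a) (h (m + a) (h b x)) + sc (- of_int b) (h a (h (m + b) x))
      + (if m + a = 0 then sc g (h b x) else 0) + (if m + b = 0 then sc g (h a x) else 0)"
    unfolding L_h'[of a] L_h'[of b]
    by (cases "m + b = 0") (simp_all add: h_add h_scale h_diff algebra_simps)
  also have "\<dots> = sc (- of_int a) (normal_prod (m + a) b x) + sc (- of_int b) (normal_prod a (m + b) x)
      + (if m + a = 0 then sc g (h b x) else 0) + (if m + b = 0 then sc g (h a x) else 0)
      + (if a + b + m = 0 then sc (l * of_int (anomaly m b)) x else 0)"
  proof -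
    have "sc (- of_int a) (h (m + a) (h b x)) = sc (- of_int a) (normal_prod (m + a) b x)
        + (if b < m + a \<and> m + a + b = 0 then sc (- of_int a) (sc (of_int (m + a) * l) x) else 0)"
      "sc (- of_int b) (h a (h (m + b) x)) = sc (- of_int b) (normal_prod a (m + b) x)
        + (if m + b < a \<and> a + (m + b) = 0 then sc (- of_int b) (sc (of_int a * l) x) else 0)"
      by (simp_all only: h_h_eq_normal_prod scale_right_distrib if_distrib[of "sc _"] scale_zero_right)
    then show ?thesis
      unfolding reordering_terms_eq_anomaly[symmetric] by (simp only: add_ac)
  qed
  finally show ?thesis unfolding g_def .
qed

lemma L_quad: "L m (quad n w) - quad n (L m w) = sc (of_int (m - n)) (quad (m + n) w)
    + sc (2 * ((of_int m ^ 2 + of_int m) * z)) (h (m + n) w)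
    + (if m + n = 0 then sc (l * of_int (Sum_any (anomaly m))) w else 0)"
proof -
  define g where "g = (of_int m ^ 2 + of_int m) * z"
  define T1 where "T1 k = sc (- of_int (n - k)) (normal_prod (m + (n - k)) k w)" for k
  define T2 where "T2 k = sc (- of_int k) (normal_prod (n - k) (m + k) w)" for k
  define C1 where "C1 k = (if k = m + n then sc g (h k w) else 0)" for k
  define C2 where "C2 k = (if k = - m then sc g (h (n - k) w) else 0)" for k
  define C3 where "C3 k = (if m + n = 0 then sc (l * of_int (anomaly m k)) w else 0)" for k
  have fin_T1: "finite {k. T1 k \<noteq> 0}"
    by (rule finite_subset[OF _ finite_support_normal_prod[of "m + n" w]]) (auto simp: T1_def algebra_simps)
  have fin_T2: "finite {k. T2 k \<noteq> 0}"
  proof (rule finite_subset)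
    show "{k. T2 k \<noteq> 0} \<subseteq> (\<lambda>k. k - m) ` {k. normal_prod (m + n - k) k w \<noteq> 0}"
      by (auto simp: T2_def algebra_simps intro!: image_eqI[where x = "_ + m"])
  qed (simp add: finite_support_normal_prod)
  have fin_C: "finite {k. C1 k \<noteq> 0}" "finite {k. C2 k \<noteq> 0}" "finite {k. C3 k \<noteq> 0}"
    by (auto simp: C1_def C2_def C3_def intro: finite_subset[OF _ finite_support_anomaly])
  have "L m (quad n w) - quad n (L m w)
      = Sum_any (\<lambda>k. L m (normal_prod (n - k) k w) - normal_prod (n - k) k (L m w))"
    unfolding quad_def module_hom.Sum_any_commute[OF L_hom finite_support_normal_prod]
    by (intro Sum_any_diff[symmetric] finite_support_normal_prod finite_support_hom_normal_prod L_hom)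
  also have "\<dots> = Sum_any (\<lambda>k. T1 k + T2 k + C1 k + C2 k + C3 k)"
    unfolding L_normal_prod T1_def T2_def C1_def C2_def C3_def g_def
    by (rule Sum_any.cong) (auto simp: algebra_simps)
  also have "\<dots> = (Sum_any T1 + Sum_any T2) + (Sum_any C1 + Sum_any C2) + Sum_any C3"
    by (simp add: Sum_any.distrib finite_support_add fin_T1 fin_T2 fin_C add.assoc)
  also have "Sum_any T1 + Sum_any T2 = sc (of_int (m - n)) (quad (m + n) w)"
    unfolding T1_def T2_def by (rule Sum_any_normal_prod_shifts)
  also have "Sum_any C1 + Sum_any C2 = sc (2 * g) (h (m + n) w)"
  proof -
    have "Sum_any C1 = sc g (h (m + n) w)" "Sum_any C2 = sc g (h (m + n) w)"
      by (simp_all add: C1_def C2_def add.commute)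
    then show ?thesis by (simp only: mult_2 scale_left_distrib)
  qed
  also have "Sum_any C3 = (if m + n = 0 then sc (l * of_int (Sum_any (anomaly m))) w else 0)"
    by (simp add: C3_def Sum_any_scale_of_int[OF finite_support_anomaly])
  finally show ?thesis unfolding g_def by (simp add: add.assoc)
qed

lemma L_bracket: "L m (L n w) - L n (L m w) = sc (of_int (m - n)) (L (m + n) w)
    + (if m + n = 0 then sc ((of_int m ^ 3 - of_int m) / 12 * (1 - 12 * z ^ 2 / l)) w else 0)"
proof -
  define \<alpha> where "\<alpha> = 1 / (2 * l)"
  define \<beta> where "\<beta> = (of_int n + 1) * z / l"
  define g where "g = (of_int m ^ 2 + of_int m) * z"
  define X where "X = quad (m + n) w"
  define Y where "Y = h (m + n) w"
  define central where "central = (if m + n = 0 then \<alpha> * (l * of_int (Sum_any (anomaly m))) + \<beta> * g else 0)"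
  have "L m (L n w) - L n (L m w)
      = sc \<alpha> (L m (quad n w) - quad n (L m w)) + sc \<beta> (L m (h n w) - h n (L m w))"
    unfolding L_eq[of n] \<alpha>_def \<beta>_def by (simp add: L_add L_scale algebra_simps)
  also have "\<dots> = sc (\<alpha> * of_int (m - n)) X + sc (\<alpha> * (2 * g) - \<beta> * of_int n) Y + sc central w"
    unfolding L_quad L_h central_def X_def Y_def g_def
    by (cases "m + n = 0") (simp_all add: algebra_simps)
  also have "\<alpha> * (2 * g) - \<beta> * of_int n = of_int (m - n) * ((of_int (m + n) + 1) * z / l)"
    unfolding \<alpha>_def \<beta>_def g_def using level_nonzero by (simp add: field_simps power2_eq_square)
  also have "central = (if m + n = 0 then (of_int m ^ 3 - of_int m) / 12 * (1 - 12 * z ^ 2 / l) else 0)"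
  proof (cases "m + n = 0")
    case True
    have anomaly_sum: "of_int (Sum_any (anomaly m)) = ((of_int m ^ 3 - of_int m) / 6 :: complex)"
      using arg_cong[OF Sum_any_anomaly, of "of_int :: int \<Rightarrow> complex"] by (simp add: field_simps)
    have n: "(of_int n :: complex) = - of_int m" using True by (metis add.commute eq_neg_iff_add_eq_0 of_int_add of_int_0)
    show ?thesis
      unfolding central_def \<alpha>_def \<beta>_def g_def anomaly_sum n using level_nonzero True
      by (simp add: field_simps power2_eq_square power3_eq_cube)
  qed (simp add: central_def)
  finally show ?thesis
    unfolding L_eq[of "m + n"] X_def Y_def \<alpha>_def
    by (cases "m + n = 0") (simp_all add: algebra_simps)
qed

lemma L_preserves_h_invariant:
  assumes W: "subspace W" and hW: "\<forall>r. h r ` W \<subseteq> W" and x: "x \<in> W"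
  shows "L n x \<in> W"
proof -
  have "normal_prod a b x \<in> W" for a b
    using hW x by (auto simp: normal_prod_def image_subset_iff)
  then have "quad n x \<in> W"
    unfolding quad_def Sum_any.expand_set by (intro subspace_sum[OF W]) auto
  then show ?thesis
    unfolding L_eq using hW x
    by (intro subspace_add[OF W] subspace_scale[OF W] \<open>quad n x \<in> W\<close>) (auto simp: image_subset_iff)
qed

end

locale dbar_module = sugawara sc h l z
  for sc :: "complex \<Rightarrow> 'm::ab_group_add \<Rightarrow> 'm" and h l z +
  fixes d :: "int \<Rightarrow> 'm \<Rightarrow> 'm" and c :: complex
  assumes d_linear: "Vector_Spaces.linear sc sc (d m)"
    and d_bracket: "d m (d n v) - d n (d m v) = sc (of_int (m - n)) (d (m + n) v)
      + (if m + n = 0 then sc ((of_int m ^ 3 - of_int m) / 12 * c) v else 0)"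
    and dh_bracket: "d m (h r v) - h r (d m v) = sc (- of_int r) (h (m + r) v)
      + (if m + r = 0 then sc ((of_int m ^ 2 + of_int m) * z) v else 0)"
begin

definition d' :: "int \<Rightarrow> 'm \<Rightarrow> 'm" where
  "d' p x = d p x - L p x"

lemma d'_hom: "module_hom sc sc (d' p)"
  using d_linear[of p] L_hom[of p]
  by (simp add: d'_def module_hom_iff module_hom_iff_linear[symmetric] scale_right_diff_distrib)

lemma d'_h: "d' p (h r x) = h r (d' p x)"
proof -
  have "d p (h r x) - h r (d p x) = L p (h r x) - h r (L p x)"
    unfolding dh_bracket L_h ..
  then show ?thesis by (simp add: d'_def h_diff algebra_simps)
qed

lemma d'_L: "d' p (L q x) = L q (d' p x)"
  by (rule L_commute[OF d'_hom d'_h])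

lemma d'_bracket: "d' m (d' n w) - d' n (d' m w) = sc (of_int (m - n)) (d' (m + n) w)
    + (if m + n = 0 then sc ((of_int m ^ 3 - of_int m) / 12 * (c - (1 - 12 * z ^ 2 / l))) w else 0)"
proof -
  have d_split: "d p x = d' p x + L p x" for p x by (simp add: d'_def)
  have "d m (d n w) - d n (d m w) = (d' m (d' n w) - d' n (d' m w)) + (L m (L n w) - L n (L m w))"
    unfolding d_split[of _ w] d_split[of _ "_ + _"]
    by (simp add: module_hom.add[OF d'_hom] L_add d'_L algebra_simps)
  then have "d' m (d' n w) - d' n (d' m w)
      = (d m (d n w) - d n (d m w)) - (L m (L n w) - L n (L m w))"
    by (simp add: algebra_simps)
  also have "\<dots> = sc (of_int (m - n)) (d (m + n) w - L (m + n) w)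
      + (if m + n = 0 then sc ((of_int m ^ 3 - of_int m) / 12 * c) w
           - sc ((of_int m ^ 3 - of_int m) / 12 * (1 - 12 * z ^ 2 / l)) w else 0)"
    unfolding d_bracket L_bracket by (simp add: scale_right_diff_distrib)
  finally show ?thesis
    by (simp add: d'_def scale_left_diff_distrib right_diff_distrib)
qed

(* Downward induction: [d'_(-1), d'_q] = (-1-q) d'_(q-1) for q <= -2. *)
lemma d'_vanishing_propagates:
  assumes "\<And>p. - 2 \<le> p \<Longrightarrow> d' p v = 0"
  shows "d' p v = 0"
proof (cases "- 2 \<le> p")
  case False
  then have "p \<le> - 2" by simp
  then show ?thesis
  proof (induction rule: int_le_induct)
    case base
    show ?case using assms by simp
  next
    case (step q)
    have "sc (of_int (- 1 - q)) (d' (- 1 + q) v) = 0"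
      using d'_bracket[of "- 1" q v] step assms[of "- 1"] by (simp add: module_hom.zero[OF d'_hom])
    moreover have "(of_int (- 1 - q) :: complex) \<noteq> 0"
      using step.hyps of_int_eq_0_iff[of "- 1 - q"] by simp
    ultimately have "d' (- 1 + q) v = 0" by simp
    then show ?case by (simp add: add.commute)
  qed
qed (use assms in simp)

lemma d_eq_L_if_simple:
  assumes simple: "simple_Dbar sc d h"
    and v: "v \<noteq> 0" "\<And>p. - 2 \<le> p \<Longrightarrow> d' p v = 0"
  shows "d n x = L n x"
proof -
  define W where "W = {x. \<forall>p. d' p x = 0}"
  have "subspace W"
    unfolding W_def
    by (rule subspaceI) (simp_all add: module_hom.zero[OF d'_hom] module_hom.add[OF d'_hom]
        module_hom.scale[OF d'_hom])
  moreover have "\<forall>r. h r ` W \<subseteq> W"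
    unfolding W_def by (auto simp: d'_h)
  moreover have "\<forall>m. d m ` W \<subseteq> W"
  proof (intro allI subsetI)
    fix m y assume "y \<in> d m ` W"
    then obtain x where x: "\<forall>p. d' p x = 0" and y: "y = d m x" by (auto simp: W_def)
    then have "y = L m x" by (simp add: d'_def)
    then show "y \<in> W" using x by (simp add: W_def d'_L)
  qed
  moreover have "v \<in> W"
    unfolding W_def using d'_vanishing_propagates[OF v(2)] by blast
  ultimately have "W = UNIV"
    using simple v(1) unfolding simple_Dbar_def by blast
  then have "x \<in> W" by simp
  then show ?thesis by (simp add: W_def d'_def)
qed

lemma central_charge_if_d_eq_L:
  fixes v :: 'm
  assumes dL: "\<And>n x. d n x = L n x" and v: "v \<noteq> 0"
  shows "c = 1 - 12 * z ^ 2 / l"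
proof -
  have "d' p x = 0" for p x by (simp add: d'_def dL)
  then have "sc (1 / 2 * (c - (1 - 12 * z ^ 2 / l))) v = 0"
    using d'_bracket[of 2 "- 2" v] by simp
  then show ?thesis using v by simp
qed

lemma h_invariant_trivial_if_d_eq_L:
  assumes simple: "simple_Dbar sc d h" and dL: "\<And>n x. d n x = L n x"
    and W: "subspace W" "\<forall>r. h r ` W \<subseteq> W"
  shows "W = {0} \<or> W = UNIV"
proof -
  have "\<forall>m. d m ` W \<subseteq> W"
    using L_preserves_h_invariant[OF W] by (auto simp: dL)
  then show ?thesis
    using simple W unfolding simple_Dbar_def by blast
qed

end

lemma dbar_module_if_is_Dbar_module:
  assumes "is_Dbar_module sc d h c z l" and "restricted d h" and "l \<noteq> 0"
  shows "dbar_module sc h l z d c"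
proof -
  have "\<exists>N. \<forall>i\<ge>N. h i v = 0" for v
    using assms(2) unfolding restricted_def by meson
  then show ?thesis
    using assms(1,3) unfolding is_Dbar_module_def
    by (intro dbar_module.intro sugawara.intro heisenberg_module.intro
        heisenberg_module_axioms.intro sugawara_axioms.intro dbar_module_axioms.intro) simp_all
qed

theorem proposition5p4:
  fixes sc :: "complex \<Rightarrow> 'm::ab_group_add \<Rightarrow> 'm"
    and d h :: "int \<Rightarrow> 'm \<Rightarrow> 'm"
    and c zM l :: complex
  assumes "is_Dbar_module sc d h c zM l"
    and "restricted d h"
    and "simple_Dbar sc d h"
    and "l \<noteq> 0"
    and "rM_minus_infty sc d h l zM"
  shows "\<exists>z::complex.
           hgen sc h (K0 sc d h l zM) = UNIV \<and>
           zM = z \<and>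
           (\<forall>n v. d n v = Lbar sc h l z n v) \<and>
           c = 1 - 12 * z ^ 2 / l \<and>
           simple_hbar_sub sc h (hgen sc h (K0 sc d h l zM))"
proof -
  interpret dbar_module sc h l zM d c
    using dbar_module_if_is_Dbar_module[OF assms(1,2,4)] .
  obtain v where v: "v \<in> Yset sc d h l zM (- 2)" "v \<noteq> 0"
    using assms(5) unfolding rM_minus_infty_def by blast
  then have dL: "d n x = L n x" for n x
    by (intro d_eq_L_if_simple[OF assms(3) v(2)]) (simp add: Yset_def d'_def)
  have "v \<in> K0 sc d h l zM"
    using v(1) by (simp add: K0_def Yset_def dL)
  then have K: "hgen sc h (K0 sc d h l zM) = UNIV"
    using h_invariant_trivial_if_d_eq_L[OF assms(3) dL subspace_hgen] hgen_h_invariant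
      hgen_superset v(2) by blast
  have "simple_hbar_sub sc h UNIV"
    unfolding simple_hbar_sub_def
    using h_invariant_trivial_if_d_eq_L[OF assms(3) dL] v(2) by auto
  then show ?thesis
    using K dL central_charge_if_d_eq_L[OF dL v(2)] by auto
qed

end
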